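(* Assume that $k\le M_1\log p$, $s>2$, $s^2k^{-1}(k+\log p)^2>Cn^{(0)}$, $p>s^\mu$, and $s[1+(\log p)/k]/n^{(0)}=o(1)$, for some sufficiently large constants $M_1,C>0$ and some $\mu>2$. Then, given any $\alpha<\beta<1$ and some constant $c>0$, there exists no test of asymptotic significance level $\alpha$ for $H_{0,ab}$ satisfying $\lim_{n^{(0)}\to\infty}\inf_{v\in\mathcal A(c)}\mathbb P_v(\text{test rejects }H_{0,ab})\ge\beta$ with $\mathcal A(c)=\mathcal A^{l1}(s,c\epsilon_n,\xi)$ and $\epsilon_n=\sqrt{k/n^{(0)}}$.
   Context: Model: for $t=1,\dots,k$, $X^{(t)}\sim N(0,(\Omega^{(t)})^{-1})$ on $\mathbb R^p$, $\Omega^{(t)}=(\omega^{(t)}_{a,b})$ positive definite; for each $t$ one observes $n^{(t)}$ i.i.d. copies, independent across $t$; $n^{(0)}=\min_tn^{(t)}$, and the sample sizes satisfy Condition 2: $n^{(t)}$ of the same order with $\max_tn^{(t)}/n^{(0)}\le M_0$. Fix a pair $a\ne b$ and a sign vector $\xi\in\{1,-1\}^k$. $\omega^0_{a,b}=(\omega^{(1)}_{a,b},\dots,\omega^{(k)}_{a,b})'$, $\|\cdot\|_1$ the $\ell_1$ norm. Condition 1: there is a constant $M>0$ with $1/M\le\lambda_{\min}(\Omega^{(t)})\le\lambda_{\max}(\Omega^{(t)})\le M$ for all $t$. With $\Omega^0=\{\Omega^{(t)}\}_{t=1}^k$ and positive integer $s$: $\mathcal F(s)=\{\Omega^0:\max_a\sum_{b\ne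 a}1\{\omega^0_{a,b}\ne\mathbf0\}\le s$ and Condition 1 holds$\}$; $H_{0,ab}:\Omega^0\in\{\Omega^0\in\mathcal F(s):\omega^0_{a,b}=\mathbf0\}$; $\mathcal A^{l1}(s,\epsilon,\xi)=\{\Omega^0\in\mathcal F(s):\xi'\omega^0_{a,b}=\|\omega^0_{a,b}\|_1\ge\epsilon\}$. A test is a $\{0,1\}$-valued function of the data; it has asymptotic significance level $\alpha$ if its rejection probability under $H_{0,ab}$ tends to (at most) $\alpha$ as $n^{(0)}\to\infty$; $\mathbb P_v$ is the data law under parameter $v$. Asymptotics as $n^{(0)}\to\infty$ with $p,k,s$ allowed to depend on $n^{(0)}$. *)

theory Defs
  imports "HOL-Probability.Probability" "Jordan_Normal_Form.Char_Poly"
begin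

text \<open>Condition 1 for a single p x p precision matrix: symmetric, and all
  eigenvalues lie in [1/M, M] (for a real symmetric matrix all eigenvalues are real,
  so these are lambda_min >= 1/M and lambda_max <= M).\<close>
definition cond1 :: "real \<Rightarrow> nat \<Rightarrow> real mat \<Rightarrow> bool" where
  "cond1 M p A \<longleftrightarrow> A \<in> carrier_mat p p \<and> transpose_mat A = A \<and>
     (\<forall>e. eigenvalue A e \<longrightarrow> 1 / M \<le> e \<and> e \<le> M)"

definition F_class :: "real \<Rightarrow> nat \<Rightarrow> nat \<Rightarrow> nat \<Rightarrow> (nat \<Rightarrow> real mat) set" where
  "F_class M p k s = {Om. (\<forall>t<k. cond1 M p (Om t)) \<and>
     (\<forall>a<p. card {b. b < p \<and> b \<noteq> a \<and> (\<exists>t<k. Om t $$ (a, b) \<noteq> 0)} \<le> s)}"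

definition H0_set :: "real \<Rightarrow> nat \<Rightarrow> nat \<Rightarrow> nat \<Rightarrow> nat \<Rightarrow> nat \<Rightarrow> (nat \<Rightarrow> real mat) set" where
  "H0_set M p k s a b = {Om \<in> F_class M p k s. \<forall>t<k. Om t $$ (a, b) = 0}"

definition Al1_set :: "real \<Rightarrow> nat \<Rightarrow> nat \<Rightarrow> nat \<Rightarrow> nat \<Rightarrow> nat \<Rightarrow> real \<Rightarrow> (nat \<Rightarrow> real)
     \<Rightarrow> (nat \<Rightarrow> real mat) set" where
  "Al1_set M p k s a b eps xi = {Om \<in> F_class M p k s.
     (\<Sum>t<k. xi t * Om t $$ (a, b)) = (\<Sum>t<k. \<bar>Om t $$ (a, b)\<bar>) \<and>
     (\<Sum>t<k. \<bar>Om t $$ (a, b)\<bar>) \<ge> eps}"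

definition gauss_dens :: "nat \<Rightarrow> real mat \<Rightarrow> (nat \<Rightarrow> real) \<Rightarrow> real" where
  "gauss_dens p Om y = (2 * pi) powr (- (real p / 2)) * sqrt (det Om) *
     exp (- (1/2) * (\<Sum>i<p. \<Sum>j<p. y i * Om $$ (i, j) * y j))"

text \<open>Index set of the whole data: (t, i, j) = coordinate j of the i-th observation
  of population t.\<close>
definition data_idx :: "nat \<Rightarrow> nat \<Rightarrow> (nat \<Rightarrow> nat) \<Rightarrow> (nat \<times> nat \<times> nat) set" where
  "data_idx p k n = {(t, i, j). t < k \<and> i < n t \<and> j < p}"

definition data_space :: "nat \<Rightarrow> nat \<Rightarrow> (nat \<Rightarrow> nat) \<Rightarrow> (nat \<times> nat \<times> nat \<Rightarrow> real) measure" where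
  "data_space p k n = PiM (data_idx p k n) (\<lambda>_. lborel)"

definition data_law :: "nat \<Rightarrow> nat \<Rightarrow> (nat \<Rightarrow> nat) \<Rightarrow> (nat \<Rightarrow> real mat)
     \<Rightarrow> (nat \<times> nat \<times> nat \<Rightarrow> real) measure" where
  "data_law p k n Om = density (data_space p k n)
     (\<lambda>x. ennreal (\<Prod>t<k. \<Prod>i<n t. gauss_dens p (Om t) (\<lambda>j. x (t, i, j))))"

definition rej_prob :: "nat \<Rightarrow> nat \<Rightarrow> (nat \<Rightarrow> nat) \<Rightarrow> (nat \<Rightarrow> real mat)
     \<Rightarrow> ((nat \<times> nat \<times> nat \<Rightarrow> real) \<Rightarrow> bool) \<Rightarrow> real" where
  "rej_prob p k n Om phi = measure (data_law p k n Om)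
     {x \<in> space (data_law p k n Om). phi x}"

end

theory Submission
  imports Defs
begin

text \<open>A two-point lower bound. Under the null every population has the identity precision
  matrix; under the alternative population \<open>t\<close> has \<open>(I + \<xi>\<^sub>t \<delta> E\<^sub>a\<^sub>b)\<^sup>T (I + \<xi>\<^sub>t \<delta> E\<^sub>a\<^sub>b)\<close>, whose
  \<open>(a, b)\<close> entry is \<open>\<xi>\<^sub>t \<delta>\<close>, so that \<open>\<xi>' \<omega>\<^sub>a\<^sub>b = \<parallel>\<omega>\<^sub>a\<^sub>b\<parallel>\<^sub>1 = k \<delta>\<close>. These matrices have determinant one,
  eigenvalues in \<open>[1 - \<delta>, 1 + \<delta> + \<delta>\<^sup>2]\<close> and only two off-diagonal entries, so both families lie in
  the classes as soon as \<open>\<delta>\<close> is small and \<open>s \<ge> 2\<close>. All Gaussian integrals are explicit after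
  integrating out coordinate \<open>a\<close> first: the chi-square divergence of the alternative data law from
  the null one is \<open>(1 - 2 \<delta>\<^sup>2)\<^sup>-\<^sup>N\<^sup>/\<^sup>2 - 1\<close>, \<open>N\<close> the total sample size. With \<open>\<delta> = c / \<surd>(k n\<^sub>0)\<close> and
  \<open>N \<le> k M\<^sub>0 n\<^sub>0\<close> this is of order \<open>M\<^sub>0 c\<^sup>2\<close>, so for small \<open>c\<close> the rejection probabilities of any
  test under the two laws differ by less than \<open>\<beta> - \<alpha>\<close>.\<close>

section \<open>Sheared identity precision matrices\<close>

definition shear_mat :: "nat \<Rightarrow> nat \<Rightarrow> nat \<Rightarrow> real \<Rightarrow> real mat" where
  "shear_mat p a b d = mat p p (\<lambda>(i, j). if i = j then 1 else if i = a \<and> j = b then d else 0)"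

definition shear_prec :: "nat \<Rightarrow> nat \<Rightarrow> nat \<Rightarrow> real \<Rightarrow> real mat" where
  "shear_prec p a b d = transpose_mat (shear_mat p a b d) * shear_mat p a b d"

lemma shear_mat_carrier [simp]: "shear_mat p a b d \<in> carrier_mat p p"
  by (simp add: shear_mat_def)

lemma shear_prec_carrier [simp]: "shear_prec p a b d \<in> carrier_mat p p"
  unfolding shear_prec_def by (rule mult_carrier_mat[of _ p p]) auto

lemma transpose_shear_prec: "transpose_mat (shear_prec p a b d) = shear_prec p a b d"
  unfolding shear_prec_def by (subst transpose_mult[of _ p p _ p]) auto

lemma quadratic_form_transpose_mult:
  fixes A :: "real mat" and y :: "nat \<Rightarrow> real"
  assumes "A \<in> carrier_mat p p"
  shows "(\<Sum>i<p. \<Sum>j<p. y i * (transpose_mat A * A) $$ (i, j) * y j) = (\<Sum>l<p. (\<Sum>j<p. A $$ (l, j) * y j)\<^sup>2)"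
proof -
  have "y i * (transpose_mat A * A) $$ (i, j) * y j = (\<Sum>l<p. (A $$ (l, i) * y i) * (A $$ (l, j) * y j))"
    if "i < p" "j < p" for i j
  proof -
    have "(transpose_mat A * A) $$ (i, j) = (\<Sum>l<p. A $$ (l, i) * A $$ (l, j))"
      using assms that by (simp add: scalar_prod_def lessThan_atLeast0)
    then have "y i * (transpose_mat A * A) $$ (i, j) * y j = (\<Sum>l<p. y i * (A $$ (l, i) * A $$ (l, j)) * y j)"
      by (simp add: sum_distrib_left sum_distrib_right)
    also have "\<dots> = (\<Sum>l<p. (A $$ (l, i) * y i) * (A $$ (l, j) * y j))"
      by (intro sum.cong refl) (simp add: algebra_simps)
    finally show ?thesis .
  qed
  then have "(\<Sum>i<p. \<Sum>j<p. y i * (transpose_mat A * A) $$ (i, j) * y j)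
      = (\<Sum>i<p. \<Sum>j<p. \<Sum>l<p. (A $$ (l, i) * y i) * (A $$ (l, j) * y j))"
    by simp
  also have "\<dots> = (\<Sum>i<p. \<Sum>l<p. \<Sum>j<p. (A $$ (l, i) * y i) * (A $$ (l, j) * y j))"
    by (rule sum.cong[OF refl], rule sum.swap)
  also have "\<dots> = (\<Sum>l<p. \<Sum>i<p. \<Sum>j<p. (A $$ (l, i) * y i) * (A $$ (l, j) * y j))"
    by (rule sum.swap)
  also have "\<dots> = (\<Sum>l<p. (\<Sum>i<p. A $$ (l, i) * y i) * (\<Sum>j<p. A $$ (l, j) * y j))"
    by (simp add: sum_product)
  finally show ?thesis by (simp add: power2_eq_square)
qed

lemma shear_mat_mult_vec:
  assumes "l < p" "b < p" "a \<noteq> b"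
  shows "(\<Sum>j<p. shear_mat p a b d $$ (l, j) * y j) = y l + (if l = a then d * y b else 0)"
proof -
  have "(\<Sum>j<p. shear_mat p a b d $$ (l, j) * y j)
      = (\<Sum>j<p. (if j = l then y l else 0) + (if j = b then (if l = a then d * y b else 0) else 0))"
    using assms by (intro sum.cong refl) (auto simp: shear_mat_def)
  also have "\<dots> = y l + (if l = a then d * y b else 0)"
    using assms by (simp only: sum.distrib sum.delta finite_lessThan) simp
  finally show ?thesis .
qed

lemma shear_prec_quadratic_form:
  assumes "b < p" "a \<noteq> b"
  shows "(\<Sum>i<p. \<Sum>j<p. y i * shear_prec p a b d $$ (i, j) * y j)
       = (\<Sum>l<p. (y l + (if l = a then d * y b else 0))\<^sup>2)"
  unfolding shear_prec_def quadratic_form_transpose_mult[OF shear_mat_carrier]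
  using assms by (intro sum.cong refl) (simp add: shear_mat_mult_vec)

lemma sum_squares_shear:
  fixes y :: "nat \<Rightarrow> real"
  assumes "a < p" "b < p" "a \<noteq> b"
  shows "(\<Sum>l<p. (y l + (if l = a then d * y b else 0))\<^sup>2)
       = (\<Sum>l<p. (y l)\<^sup>2) + 2 * d * y a * y b + d\<^sup>2 * (y b)\<^sup>2"
proof -
  have "(\<Sum>l<p. (y l + (if l = a then d * y b else 0))\<^sup>2)
      = (\<Sum>l<p. (y l)\<^sup>2 + (if l = a then 2 * d * y a * y b + d\<^sup>2 * (y b)\<^sup>2 else 0))"
    by (intro sum.cong) (auto simp: power2_eq_square algebra_simps)
  also have "\<dots> = (\<Sum>l<p. (y l)\<^sup>2) + 2 * d * y a * y b + d\<^sup>2 * (y b)\<^sup>2"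
    using assms by (simp only: sum.distrib sum.delta finite_lessThan) simp
  finally show ?thesis .
qed

lemma sum_squares_shear_remove:
  fixes y :: "nat \<Rightarrow> real"
  assumes "a < p" "b < p" "a \<noteq> b"
  shows "(\<Sum>l<p. (y l + (if l = a then d * y b else 0))\<^sup>2) = (y a + d * y b)\<^sup>2 + (\<Sum>l\<in>{..<p} - {a}. (y l)\<^sup>2)"
  using assms by (subst sum.remove[of _ a]) (auto intro!: sum.cong)

lemma shear_prec_entry:
  assumes "i < p" "j < p" "a < p" "b < p" "a \<noteq> b"
  shows "shear_prec p a b d $$ (i, j) = (if i = j then 1 else 0) + (if i = a \<and> j = b then d else 0)
     + (if i = b \<and> j = a then d else 0) + (if i = b \<and> j = b then d\<^sup>2 else 0)"
proof -
  have "shear_prec p a b d $$ (i, j) = (\<Sum>l<p. shear_mat p a b d $$ (l, i) * shear_mat p a b d $$ (l, j))"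
    using assms by (simp add: shear_prec_def shear_mat_def scalar_prod_def lessThan_atLeast0)
  also have "\<dots> = (\<Sum>l<p. (if l = i then (if i = j then 1 else 0) else 0)
       + (if l = a then (if i = a \<and> j = b then d else 0) else 0)
       + (if l = a then (if i = b \<and> j = a then d else 0) else 0)
       + (if l = a then (if i = b \<and> j = b then d\<^sup>2 else 0) else 0))"
    using assms by (intro sum.cong) (auto simp: shear_mat_def power2_eq_square)
  also have "\<dots> = (if i = j then 1 else 0) + (if i = a \<and> j = b then d else 0)
     + (if i = b \<and> j = a then d else 0) + (if i = b \<and> j = b then d\<^sup>2 else 0)"
    using assms by (simp only: sum.distrib sum.delta finite_lessThan) simp
  finally show ?thesis .
qed

lemma det_shear_mat:
  assumes "a \<noteq> b"
  shows "det (shear_mat p a b d) = 1"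
proof -
  have diag: "diag_mat (shear_mat p a b d) = replicate p 1"
    by (rule nth_equalityI) (auto simp: diag_mat_def shear_mat_def)
  have "det (shear_mat p a b d) = prod_list (diag_mat (shear_mat p a b d))"
  proof (cases "a < b")
    case True
    then have "upper_triangular (shear_mat p a b d)"
      by (auto simp: upper_triangular_def shear_mat_def)
    then show ?thesis by (rule det_upper_triangular[of _ p]) simp
  next
    case False
    then show ?thesis
      using assms by (intro det_lower_triangular[of p]) (auto simp: shear_mat_def)
  qed
  then show ?thesis by (simp add: diag)
qed

lemma det_shear_prec: "a \<noteq> b \<Longrightarrow> det (shear_prec p a b d) = 1"
  unfolding shear_prec_def
  by (subst det_mult[of _ p]) (auto simp: det_transpose[of _ p] det_shear_mat)

lemma eigenvalue_quadratic_form: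
  fixes A :: "real mat"
  assumes "A \<in> carrier_mat p p" "eigenvalue A e"
  obtains y :: "nat \<Rightarrow> real" where "(\<Sum>i<p. (y i)\<^sup>2) > 0"
    "(\<Sum>i<p. \<Sum>j<p. y i * A $$ (i, j) * y j) = e * (\<Sum>i<p. (y i)\<^sup>2)"
proof -
  obtain v where v: "v \<in> carrier_vec p" "v \<noteq> 0\<^sub>v p" "A *\<^sub>v v = e \<cdot>\<^sub>v v"
    using assms by (auto simp: eigenvalue_def eigenvector_def)
  define y where "y = (\<lambda>i. v $ i)"
  have row: "(\<Sum>j<p. A $$ (i, j) * y j) = e * y i" if "i < p" for i
  proof -
    have "(A *\<^sub>v v) $ i = (e \<cdot>\<^sub>v v) $ i" using v by simp
    then show ?thesis using assms(1) that v(1) by (simp add: scalar_prod_def lessThan_atLeast0 y_def)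
  qed
  have "(\<Sum>i<p. \<Sum>j<p. y i * A $$ (i, j) * y j) = (\<Sum>i<p. y i * (e * y i))"
    by (intro sum.cong) (auto simp: row[symmetric] sum_distrib_left mult.assoc)
  also have "\<dots> = e * (\<Sum>i<p. (y i)\<^sup>2)" by (simp add: sum_distrib_left power2_eq_square algebra_simps)
  finally have "(\<Sum>i<p. \<Sum>j<p. y i * A $$ (i, j) * y j) = e * (\<Sum>i<p. (y i)\<^sup>2)" .
  moreover have "(\<Sum>i<p. (y i)\<^sup>2) > 0"
  proof -
    obtain i where i: "i < p" "y i \<noteq> 0"
      using v(1,2) unfolding y_def by (metis carrier_vecD eq_vecI index_zero_vec)
    have "(y i)\<^sup>2 \<le> (\<Sum>i<p. (y i)\<^sup>2)" by (rule member_le_sum) (use i in auto)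
    moreover have "(y i)\<^sup>2 > 0" using i by simp
    ultimately show ?thesis by linarith
  qed
  ultimately show ?thesis using that by blast
qed

text \<open>By the Rayleigh identity \<open>e |y|\<^sup>2 = |y|\<^sup>2 + 2 d y\<^sub>a y\<^sub>b + d\<^sup>2 y\<^sub>b\<^sup>2\<close>, with both correction
  terms bounded by multiples of \<open>|y|\<^sup>2\<close>.\<close>
lemma shear_prec_eigenvalue_bounds:
  assumes ab: "a < p" "b < p" "a \<noteq> b" and ev: "eigenvalue (shear_prec p a b d) e"
  shows "1 - \<bar>d\<bar> \<le> e \<and> e \<le> 1 + \<bar>d\<bar> + d\<^sup>2"
proof -
  obtain y :: "nat \<Rightarrow> real" where pos: "(\<Sum>i<p. (y i)\<^sup>2) > 0"
    and quad: "(\<Sum>i<p. \<Sum>j<p. y i * shear_prec p a b d $$ (i, j) * y j) = e * (\<Sum>i<p. (y i)\<^sup>2)"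
    using eigenvalue_quadratic_form[OF shear_prec_carrier ev] by blast
  define S where "S = (\<Sum>i<p. (y i)\<^sup>2)"
  have eS: "e * S = S + 2 * d * y a * y b + d\<^sup>2 * (y b)\<^sup>2"
    using quad ab unfolding S_def by (simp add: shear_prec_quadratic_form sum_squares_shear)
  have ab2: "(y a)\<^sup>2 + (y b)\<^sup>2 \<le> S"
  proof -
    have "(\<Sum>i\<in>{a, b}. (y i)\<^sup>2) \<le> S" unfolding S_def by (rule sum_mono2) (use ab in auto)
    then show ?thesis using ab by simp
  qed
  have "\<bar>2 * y a * y b\<bar> \<le> (y a)\<^sup>2 + (y b)\<^sup>2"
    using zero_le_power2[of "\<bar>y a\<bar> - \<bar>y b\<bar>"]
    unfolding power2_diff power2_abs by (simp add: abs_mult)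
  then have "\<bar>d\<bar> * \<bar>2 * y a * y b\<bar> \<le> \<bar>d\<bar> * S" using ab2 by (intro mult_left_mono) auto
  then have cross: "\<bar>2 * d * y a * y b\<bar> \<le> \<bar>d\<bar> * S" by (simp add: abs_mult ac_simps)
  have "(y b)\<^sup>2 \<le> S" using ab2 zero_le_power2[of "y a"] by linarith
  then have "d\<^sup>2 * (y b)\<^sup>2 \<le> d\<^sup>2 * S" by (intro mult_left_mono) auto
  moreover have "(1 - \<bar>d\<bar>) * S = S - \<bar>d\<bar> * S" "(1 + \<bar>d\<bar> + d\<^sup>2) * S = S + \<bar>d\<bar> * S + d\<^sup>2 * S"
    by (simp_all add: algebra_simps)
  ultimately have "(1 - \<bar>d\<bar>) * S \<le> e * S" "e * S \<le> (1 + \<bar>d\<bar> + d\<^sup>2) * S"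
    using eS cross zero_le_power2[of "d * y b"] unfolding abs_le_iff power_mult_distrib
    by linarith+
  then show ?thesis using pos by (simp add: S_def)
qed

lemma cond1_shear_prec:
  assumes "a < p" "b < p" "a \<noteq> b" "1 / M \<le> 1 - \<bar>d\<bar>" "1 + \<bar>d\<bar> + d\<^sup>2 \<le> M"
  shows "cond1 M p (shear_prec p a b d)"
  unfolding cond1_def using shear_prec_eigenvalue_bounds[OF assms(1-3)] assms(4,5) transpose_shear_prec
  by fastforce

section \<open>Gaussian integrals over finite products of the real line\<close>

lemma nn_integral_gaussian:
  assumes "c > 0"
  shows "(\<integral>\<^sup>+u. ennreal (exp (-(c/2) * (u + m)\<^sup>2)) \<partial>lborel) = ennreal (sqrt (2 * pi / c))"
proof -
  define \<sigma> where "\<sigma> = 1 / sqrt c"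
  have \<sigma>: "\<sigma> > 0" "\<sigma>\<^sup>2 = 1 / c" using assms by (simp_all add: \<sigma>_def power_divide)
  have normal: "(\<integral>\<^sup>+u. ennreal (normal_density (-m) \<sigma> u) \<partial>lborel) = 1"
    using \<sigma> by (subst nn_integral_eq_integral)
      (auto intro: integrable_normal_density integral_normal_density)
  have "(\<integral>\<^sup>+u. ennreal (exp (-(c/2) * (u + m)\<^sup>2)) \<partial>lborel)
      = (\<integral>\<^sup>+u. ennreal (sqrt (2 * pi / c)) * ennreal (normal_density (-m) \<sigma> u) \<partial>lborel)"
    using assms \<sigma> by (intro nn_integral_cong) (simp add: normal_density_def ennreal_mult[symmetric])
  also have "\<dots> = ennreal (sqrt (2 * pi / c))"
    by (subst nn_integral_cmult) (auto simp: normal)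
  finally show ?thesis .
qed

lemma nn_integral_PiM_image_prod:
  fixes e :: "'i \<Rightarrow> 'a" and \<phi> :: "'i \<Rightarrow> real \<Rightarrow> real"
  assumes inj: "inj_on e L" and fin: "finite L"
    and nonneg: "\<And>l v. 0 \<le> \<phi> l v" and meas: "\<And>l. \<phi> l \<in> borel_measurable borel"
  shows "(\<integral>\<^sup>+x. ennreal (\<Prod>l\<in>L. \<phi> l (x (e l))) \<partial>PiM (e ` L) (\<lambda>_. lborel))
       = (\<Prod>l\<in>L. \<integral>\<^sup>+v. ennreal (\<phi> l v) \<partial>lborel)"
proof -
  interpret product_sigma_finite "\<lambda>_. lborel" by standard
  define g where "g = (\<lambda>\<kappa> v. ennreal (\<phi> (the_inv_into L e \<kappa>) v))"
  have "(\<integral>\<^sup>+x. ennreal (\<Prod>l\<in>L. \<phi> l (x (e l))) \<partial>PiM (e ` L) (\<lambda>_. lborel))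
      = (\<integral>\<^sup>+x. (\<Prod>\<kappa>\<in>e ` L. g \<kappa> (x \<kappa>)) \<partial>PiM (e ` L) (\<lambda>_. lborel))"
  proof (intro nn_integral_cong)
    fix x :: "'a \<Rightarrow> real"
    have "ennreal (\<Prod>l\<in>L. \<phi> l (x (e l))) = (\<Prod>l\<in>L. g (e l) (x (e l)))"
      using inj nonneg by (simp add: prod_ennreal g_def the_inv_into_f_f)
    also have "\<dots> = (\<Prod>\<kappa>\<in>e ` L. g \<kappa> (x \<kappa>))"
      using inj by (simp add: prod.reindex)
    finally show "ennreal (\<Prod>l\<in>L. \<phi> l (x (e l))) = (\<Prod>\<kappa>\<in>e ` L. g \<kappa> (x \<kappa>))" .
  qed
  also have "\<dots> = (\<Prod>\<kappa>\<in>e ` L. integral\<^sup>N lborel (g \<kappa>))"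
    using fin meas by (intro product_nn_integral_prod) (auto simp: g_def)
  also have "\<dots> = (\<Prod>l\<in>L. \<integral>\<^sup>+v. ennreal (\<phi> l v) \<partial>lborel)"
    using inj by (simp add: prod.reindex g_def the_inv_into_f_f)
  finally show ?thesis .
qed

lemma nn_integral_PiM_image_split:
  fixes e :: "'i \<Rightarrow> 'a"
  assumes inj: "inj_on e L" and fin: "finite L" and a: "a \<in> L"
    and meas: "f \<in> borel_measurable (PiM (e ` L) (\<lambda>_. lborel))"
  shows "(\<integral>\<^sup>+y. f y \<partial>PiM (e ` L) (\<lambda>_. lborel))
       = (\<integral>\<^sup>+x. (\<integral>\<^sup>+u. f (x(e a := u)) \<partial>lborel) \<partial>PiM (e ` (L - {a})) (\<lambda>_. lborel))"
proof -
  interpret product_sigma_finite "\<lambda>_. lborel" by standard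
  have L: "e ` L = insert (e a) (e ` (L - {a}))" using a by auto
  have "e a \<notin> e ` (L - {a})" using inj a by (auto simp: inj_on_def)
  then show ?thesis using meas fin unfolding L by (intro product_nn_integral_insert) auto
qed

lemma borel_measurable_sheared_gaussian:
  fixes e :: "'i \<Rightarrow> 'a" and c :: "'i \<Rightarrow> real" and m :: real
  assumes "a \<in> L" "b \<in> L"
  shows "(\<lambda>y. exp (-(1/2) * (y (e a) + m * y (e b))\<^sup>2 - (\<Sum>l\<in>L - {a}. c l / 2 * (y (e l))\<^sup>2)))
    \<in> borel_measurable (PiM (e ` L) (\<lambda>_. lborel))"
proof -
  \<comment> \<open>\<open>measurable\<close> proves index side conditions by simp and reads chained facts as rules\<close>
  have [simp]: "e l \<in> e ` L" if "l \<in> L" for l using that by simp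
  note assms [simp]
  show ?thesis by measurable
qed

text \<open>Integrating out coordinate \<open>a\<close> first removes the shear \<open>m y\<^sub>b\<close> from the Gaussian
  factor in \<open>y\<^sub>a\<close>; what remains is a product of centred one-dimensional Gaussians.\<close>
lemma nn_integral_PiM_sheared_gaussian:
  fixes e :: "'i \<Rightarrow> 'a" and c :: "'i \<Rightarrow> real"
  assumes inj: "inj_on e L" and fin: "finite L" and ab: "a \<in> L" "b \<in> L" "a \<noteq> b"
    and c: "\<And>l. l \<in> L - {a} \<Longrightarrow> c l > 0"
  shows "(\<integral>\<^sup>+y. ennreal (exp (-(1/2) * (y (e a) + m * y (e b))\<^sup>2 - (\<Sum>l\<in>L - {a}. c l / 2 * (y (e l))\<^sup>2)))
          \<partial>PiM (e ` L) (\<lambda>_. lborel))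
       = ennreal (sqrt (2 * pi) * (\<Prod>l\<in>L - {a}. sqrt (2 * pi / c l)))"
proof -
  let ?L = "L - {a}"
  have injL: "inj_on e ?L" using inj by (rule inj_on_subset) auto
  have ne: "e l \<noteq> e a" if "l \<in> L" "l \<noteq> a" for l
    using inj ab that by (auto simp: inj_on_def)
  have upd_b: "(x(e a := u)) (e b) = x (e b)" for x u
    using ne ab by simp
  have upd_sum: "(\<Sum>l\<in>?L. c l / 2 * ((x(e a := u)) (e l))\<^sup>2) = (\<Sum>l\<in>?L. c l / 2 * (x (e l))\<^sup>2)" for x u
    using ne by (intro sum.cong refl) simp
  have "(\<integral>\<^sup>+y. ennreal (exp (-(1/2) * (y (e a) + m * y (e b))\<^sup>2 - (\<Sum>l\<in>?L. c l / 2 * (y (e l))\<^sup>2)))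
          \<partial>PiM (e ` L) (\<lambda>_. lborel))
      = (\<integral>\<^sup>+x. (\<integral>\<^sup>+u. ennreal (exp (-(1/2) * (u + m * x (e b))\<^sup>2)) *
          ennreal (exp (- (\<Sum>l\<in>?L. c l / 2 * (x (e l))\<^sup>2))) \<partial>lborel) \<partial>PiM (e ` ?L) (\<lambda>_. lborel))"
    using ab by (subst nn_integral_PiM_image_split[OF inj fin \<open>a \<in> L\<close>])
      (measurable, intro nn_integral_cong, simp only: upd_b upd_sum fun_upd_same,
       simp add: ennreal_mult[symmetric] exp_add[symmetric])
  also have "\<dots> = (\<integral>\<^sup>+x. ennreal (\<Prod>l\<in>?L. exp (- (c l / 2) * (x (e l))\<^sup>2)) \<partial>PiM (e ` ?L) (\<lambda>_. lborel))
      * ennreal (sqrt (2 * pi))"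
    using nn_integral_gaussian[of 1] fin
    by (simp add: nn_integral_multc nn_integral_cmult exp_sum[symmetric] sum_negf mult.commute)
  also have "\<dots> = (\<Prod>l\<in>?L. ennreal (sqrt (2 * pi / c l))) * ennreal (sqrt (2 * pi))"
    using c nn_integral_gaussian[of _ 0] fin
    by (subst nn_integral_PiM_image_prod[OF injL]) auto
  also have "\<dots> = ennreal (sqrt (2 * pi) * (\<Prod>l\<in>?L. sqrt (2 * pi / c l)))"
  proof -
    have "(\<Prod>l\<in>?L. ennreal (sqrt (2 * pi / c l))) = ennreal (\<Prod>l\<in>?L. sqrt (2 * pi / c l))"
      using c by (intro prod_ennreal) (simp add: less_imp_le)
    then show ?thesis by (simp add: ennreal_mult' mult.commute)
  qed
  finally show ?thesis .
qed

lemma borel_measurable_prod_restrict: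
  fixes J :: "'b \<Rightarrow> 'a set" and f :: "'b \<Rightarrow> ('a \<Rightarrow> real) \<Rightarrow> ennreal"
  assumes "\<And>\<beta>. \<beta> \<in> B \<Longrightarrow> J \<beta> \<subseteq> I" "\<And>\<beta>. \<beta> \<in> B \<Longrightarrow> f \<beta> \<in> borel_measurable (PiM (J \<beta>) (\<lambda>_. lborel))"
  shows "(\<lambda>x. \<Prod>\<beta>\<in>B. f \<beta> (restrict x (J \<beta>))) \<in> borel_measurable (PiM I (\<lambda>_. lborel))"
proof (intro borel_measurable_prod_ennreal)
  fix \<beta> assume "\<beta> \<in> B"
  with assms(1) have "(\<lambda>x. restrict x (J \<beta>)) \<in> measurable (PiM I (\<lambda>_. lborel)) (PiM (J \<beta>) (\<lambda>_. lborel))"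
    by (intro measurable_restrict_subset) auto
  from measurable_comp[OF this assms(2)[OF \<open>\<beta> \<in> B\<close>]]
  show "(\<lambda>x. f \<beta> (restrict x (J \<beta>))) \<in> borel_measurable (PiM I (\<lambda>_. lborel))"
    by (simp add: comp_def)
qed

lemma nn_integral_PiM_blocks:
  fixes J :: "'b \<Rightarrow> 'a set" and f :: "'b \<Rightarrow> ('a \<Rightarrow> real) \<Rightarrow> ennreal"
  assumes "finite B" "\<And>\<beta>. \<beta> \<in> B \<Longrightarrow> finite (J \<beta>)" "disjoint_family_on J B"
    "\<And>\<beta>. \<beta> \<in> B \<Longrightarrow> f \<beta> \<in> borel_measurable (PiM (J \<beta>) (\<lambda>_. lborel))"
  shows "(\<integral>\<^sup>+x. (\<Prod>\<beta>\<in>B. f \<beta> (restrict x (J \<beta>))) \<partial>PiM (\<Union>\<beta>\<in>B. J \<beta>) (\<lambda>_. lborel))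
     = (\<Prod>\<beta>\<in>B. \<integral>\<^sup>+y. f \<beta> y \<partial>PiM (J \<beta>) (\<lambda>_. lborel))"
  using assms
proof (induction B rule: finite_induct)
  case empty
  show ?case by (simp add: PiM_empty nn_integral_count_space_finite)
next
  case (insert \<beta> B)
  interpret product_sigma_finite "\<lambda>_. lborel" by standard
  let ?U = "\<Union>\<beta>\<in>B. J \<beta>"
  have disj: "J \<beta> \<inter> ?U = {}"
    using insert.prems(2) insert.hyps(2) unfolding disjoint_family_on_def by auto
  have finU: "finite ?U" using insert by auto
  have finb: "finite (J \<beta>)" using insert by auto
  have un: "(\<Union>\<beta>'\<in>insert \<beta> B. J \<beta>') = J \<beta> \<union> ?U" by auto
  have meas: "(\<lambda>x. \<Prod>\<beta>'\<in>insert \<beta> B. f \<beta>' (restrict x (J \<beta>'))) \<in> borel_measurable (PiM (J \<beta> \<union> ?U) (\<lambda>_. lborel))"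
    using insert.prems(3) by (intro borel_measurable_prod_restrict) auto
  have IH: "(\<integral>\<^sup>+x. (\<Prod>\<beta>\<in>B. f \<beta> (restrict x (J \<beta>))) \<partial>PiM ?U (\<lambda>_. lborel))
     = (\<Prod>\<beta>\<in>B. \<integral>\<^sup>+y. f \<beta> y \<partial>PiM (J \<beta>) (\<lambda>_. lborel))"
    using insert by (intro insert.IH) (auto simp: disjoint_family_on_def)
  have measB: "(\<lambda>y. \<Prod>\<beta>'\<in>B. f \<beta>' (restrict y (J \<beta>'))) \<in> borel_measurable (PiM ?U (\<lambda>_. lborel))"
    using insert.prems(3) by (intro borel_measurable_prod_restrict) auto
  have "(\<integral>\<^sup>+x. (\<Prod>\<beta>'\<in>insert \<beta> B. f \<beta>' (restrict x (J \<beta>'))) \<partial>PiM (\<Union>\<beta>'\<in>insert \<beta> B. J \<beta>') (\<lambda>_. lborel))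
    = (\<integral>\<^sup>+x. (\<integral>\<^sup>+y. (\<Prod>\<beta>'\<in>insert \<beta> B. f \<beta>' (restrict (merge (J \<beta>) ?U (x, y)) (J \<beta>'))) \<partial>PiM ?U (\<lambda>_. lborel)) \<partial>PiM (J \<beta>) (\<lambda>_. lborel))"
    unfolding un by (rule product_nn_integral_fold[OF disj finb finU meas])
  also have "\<dots> = (\<integral>\<^sup>+x. (\<integral>\<^sup>+y. f \<beta> x * (\<Prod>\<beta>'\<in>B. f \<beta>' (restrict y (J \<beta>'))) \<partial>PiM ?U (\<lambda>_. lborel)) \<partial>PiM (J \<beta>) (\<lambda>_. lborel))"
  proof (intro nn_integral_cong)
    fix x y :: "'a \<Rightarrow> real" assume x: "x \<in> space (PiM (J \<beta>) (\<lambda>_. lborel))" and y: "y \<in> space (PiM ?U (\<lambda>_. lborel))"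
    have rx: "restrict (merge (J \<beta>) ?U (x, y)) (J \<beta>) = x"
      using disj x by (simp add: space_PiM restrict_PiE)
    have ry: "restrict (merge (J \<beta>) ?U (x, y)) (J \<beta>') = restrict y (J \<beta>')" if "\<beta>' \<in> B" for \<beta>'
      using disj that by (intro ext) (auto simp: restrict_def merge_def)
    show "(\<Prod>\<beta>'\<in>insert \<beta> B. f \<beta>' (restrict (merge (J \<beta>) ?U (x, y)) (J \<beta>'))) = f \<beta> x * (\<Prod>\<beta>'\<in>B. f \<beta>' (restrict y (J \<beta>')))"
      using insert.hyps by (simp add: rx ry cong: prod.cong)
  qed
  also have "\<dots> = (\<integral>\<^sup>+x. f \<beta> x * (\<Prod>\<beta>\<in>B. \<integral>\<^sup>+y. f \<beta> y \<partial>PiM (J \<beta>) (\<lambda>_. lborel)) \<partial>PiM (J \<beta>) (\<lambda>_. lborel))"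
    by (intro nn_integral_cong) (simp add: nn_integral_cmult measB IH)
  also have "\<dots> = (\<integral>\<^sup>+x. f \<beta> x \<partial>PiM (J \<beta>) (\<lambda>_. lborel)) * (\<Prod>\<beta>\<in>B. \<integral>\<^sup>+y. f \<beta> y \<partial>PiM (J \<beta>) (\<lambda>_. lborel))"
    using insert.prems(3) by (intro nn_integral_multc) auto
  finally show ?case by (simp only: prod.insert[OF insert.hyps])
qed

lemma nn_integral_data_space_prod:
  fixes h :: "nat \<Rightarrow> (nat \<Rightarrow> real) \<Rightarrow> real"
  assumes meas: "\<And>t i. (\<lambda>y::nat\<times>nat\<times>nat\<Rightarrow>real. h t (\<lambda>j. y (t, i, j))) \<in> borel_measurable (PiM ((\<lambda>j. (t, i, j)) ` {..<p}) (\<lambda>_. lborel))"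
    and cong: "\<And>t y z. (\<And>j. j < p \<Longrightarrow> y j = z j) \<Longrightarrow> h t y = h t z"
    and nn: "\<And>t y. 0 \<le> h t y"
  shows "(\<integral>\<^sup>+x. ennreal (\<Prod>t<k. \<Prod>i<n t. h t (\<lambda>j. x (t, i, j))) \<partial>data_space p k n)
    = (\<Prod>t<k. \<Prod>i<n t. \<integral>\<^sup>+y. ennreal (h t (\<lambda>j. y (t, i, j))) \<partial>PiM ((\<lambda>j. (t, i, j)) ` {..<p}) (\<lambda>_. lborel))"
proof -
  define B where "B = Sigma {..<k} (\<lambda>t. {..<n t})"
  define J where "J = (\<lambda>\<beta>::nat\<times>nat. (\<lambda>j. (fst \<beta>, snd \<beta>, j)) ` {..<p})"
  define f where "f = (\<lambda>\<beta>::nat\<times>nat. \<lambda>y. ennreal (h (fst \<beta>) (\<lambda>j. y (fst \<beta>, snd \<beta>, j))))"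
  have idx: "data_idx p k n = (\<Union>\<beta>\<in>B. J \<beta>)"
    by (auto simp: data_idx_def B_def J_def)
  have finB: "finite B" by (simp add: B_def)
  have "(\<integral>\<^sup>+x. ennreal (\<Prod>t<k. \<Prod>i<n t. h t (\<lambda>j. x (t, i, j))) \<partial>data_space p k n)
     = (\<integral>\<^sup>+x. (\<Prod>\<beta>\<in>B. f \<beta> (restrict x (J \<beta>))) \<partial>PiM (\<Union>\<beta>\<in>B. J \<beta>) (\<lambda>_. lborel))"
    unfolding data_space_def idx
  proof (intro nn_integral_cong)
    fix x :: "nat \<times> nat \<times> nat \<Rightarrow> real"
    have "ennreal (\<Prod>t<k. \<Prod>i<n t. h t (\<lambda>j. x (t, i, j))) = (\<Prod>t<k. \<Prod>i<n t. ennreal (h t (\<lambda>j. x (t, i, j))))"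
      using nn by (simp add: prod_ennreal prod_nonneg)
    also have "\<dots> = (\<Prod>\<beta>\<in>B. ennreal (h (fst \<beta>) (\<lambda>j. x (fst \<beta>, snd \<beta>, j))))"
      unfolding B_def by (subst prod.Sigma) (auto simp: case_prod_beta)
    also have "\<dots> = (\<Prod>\<beta>\<in>B. f \<beta> (restrict x (J \<beta>)))"
      unfolding f_def J_def by (intro prod.cong refl arg_cong[where f=ennreal] cong) auto
    finally show "ennreal (\<Prod>t<k. \<Prod>i<n t. h t (\<lambda>j. x (t, i, j))) = (\<Prod>\<beta>\<in>B. f \<beta> (restrict x (J \<beta>)))" .
  qed
  also have "\<dots> = (\<Prod>\<beta>\<in>B. \<integral>\<^sup>+y. f \<beta> y \<partial>PiM (J \<beta>) (\<lambda>_. lborel))"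
  proof (rule nn_integral_PiM_blocks[OF finB])
    show "\<And>\<beta>. \<beta> \<in> B \<Longrightarrow> finite (J \<beta>)" by (simp add: J_def)
    show "disjoint_family_on J B" by (auto simp: disjoint_family_on_def J_def)
    fix \<beta> show "f \<beta> \<in> borel_measurable (PiM (J \<beta>) (\<lambda>_. lborel))"
      unfolding f_def J_def using meas[of "fst \<beta>" "snd \<beta>"] by simp
  qed
  also have "\<dots> = (\<Prod>t<k. \<Prod>i<n t. \<integral>\<^sup>+y. ennreal (h t (\<lambda>j. y (t, i, j))) \<partial>PiM ((\<lambda>j. (t, i, j)) ` {..<p}) (\<lambda>_. lborel))"
    unfolding B_def f_def J_def by (subst prod.Sigma) (auto simp: case_prod_beta)
  finally show ?thesis .
qed

section \<open>The sheared Gaussian data law\<close>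

lemma gauss_dens_cong: "(\<And>j. j < p \<Longrightarrow> y j = z j) \<Longrightarrow> gauss_dens p Om y = gauss_dens p Om z"
  unfolding gauss_dens_def by (intro arg_cong2[where f = "(*)"] arg_cong[where f = exp] sum.cong) auto

lemma measurable_gauss_dens_block:
  assumes "e ` {..<p} \<subseteq> I"
  shows "(\<lambda>y. gauss_dens p Om (\<lambda>j. y (e j))) \<in> borel_measurable (PiM I (\<lambda>_. lborel))"
proof -
  have [simp]: "e j \<in> I" if "j < p" for j using assms that by auto
  show ?thesis unfolding gauss_dens_def by measurable
qed

lemma gauss_dens_shear_prec:
  assumes "a < p" "b < p" "a \<noteq> b"
  shows "gauss_dens p (shear_prec p a b d) y = (2 * pi) powr (- (real p / 2)) *
     exp (-(1/2) * (y a + d * y b)\<^sup>2 - (\<Sum>l\<in>{..<p} - {a}. 1 / 2 * (y l)\<^sup>2))"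
proof -
  have quad: "(\<Sum>i<p. \<Sum>j<p. y i * shear_prec p a b d $$ (i, j) * y j)
      = (y a + d * y b)\<^sup>2 + (\<Sum>l\<in>{..<p} - {a}. (y l)\<^sup>2)"
    using assms by (simp add: shear_prec_quadratic_form sum_squares_shear_remove)
  have half: "(\<Sum>l\<in>{..<p} - {a}. 1 / 2 * (y l)\<^sup>2) = 1 / 2 * (\<Sum>l\<in>{..<p} - {a}. (y l)\<^sup>2)"
    by (simp add: sum_distrib_left)
  show ?thesis
    unfolding gauss_dens_def quad half using assms by (simp add: det_shear_prec algebra_simps)
qed

lemma gauss_dens_shear_prec_pos: "a < p \<Longrightarrow> b < p \<Longrightarrow> a \<noteq> b \<Longrightarrow> gauss_dens p (shear_prec p a b d) y > 0"
  by (simp add: gauss_dens_shear_prec)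

lemma gaussian_normalizing_constant:
  assumes "0 < p"
  shows "(2 * pi) powr (- (real p / 2)) * (sqrt (2 * pi) * sqrt (2 * pi) ^ (p - 1)) = 1"
proof -
  have "sqrt (2 * pi) * sqrt (2 * pi) ^ (p - 1) = ((2 * pi) powr (1/2)) ^ p"
    using assms by (simp add: powr_half_sqrt power_Suc[symmetric])
  also have "\<dots> = (2 * pi) powr (real p / 2)" by (simp add: powr_power)
  finally show ?thesis by (simp add: powr_add[symmetric])
qed

lemma nn_integral_gauss_dens_shear_prec:
  fixes e :: "nat \<Rightarrow> 'a"
  assumes inj: "inj_on e {..<p}" and ab: "a < p" "b < p" "a \<noteq> b"
  shows "(\<integral>\<^sup>+y. ennreal (gauss_dens p (shear_prec p a b d) (\<lambda>j. y (e j))) \<partial>PiM (e ` {..<p}) (\<lambda>_. lborel)) = 1"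
proof -
  let ?\<kappa> = "(2 * pi) powr (- (real p / 2))"
  have "(\<integral>\<^sup>+y. ennreal (gauss_dens p (shear_prec p a b d) (\<lambda>j. y (e j))) \<partial>PiM (e ` {..<p}) (\<lambda>_. lborel))
      = (\<integral>\<^sup>+y. ennreal ?\<kappa> * ennreal (exp (-(1/2) * (y (e a) + d * y (e b))\<^sup>2
          - (\<Sum>l\<in>{..<p} - {a}. 1 / 2 * (y (e l))\<^sup>2))) \<partial>PiM (e ` {..<p}) (\<lambda>_. lborel))"
    using ab by (intro nn_integral_cong) (simp add: gauss_dens_shear_prec ennreal_mult)
  also have "\<dots> = ennreal ?\<kappa> * ennreal (sqrt (2 * pi) * (\<Prod>l\<in>{..<p} - {a}. sqrt (2 * pi)))"
  proof -
    have ab_in: "a \<in> {..<p}" "b \<in> {..<p}" using ab by auto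
    from nn_integral_PiM_sheared_gaussian[OF inj finite_lessThan this \<open>a \<noteq> b\<close>, of "\<lambda>_. 1" d]
    have "(\<integral>\<^sup>+y. ennreal (exp (-(1/2) * (y (e a) + d * y (e b))\<^sup>2 - (\<Sum>l\<in>{..<p} - {a}. 1 / 2 * (y (e l))\<^sup>2)))
        \<partial>PiM (e ` {..<p}) (\<lambda>_. lborel)) = ennreal (sqrt (2 * pi) * (\<Prod>l\<in>{..<p} - {a}. sqrt (2 * pi)))"
      by simp
    moreover note borel_measurable_sheared_gaussian[OF ab_in, of e d "\<lambda>_. 1"]
    ultimately show ?thesis by (simp add: nn_integral_cmult)
  qed
  also have "\<dots> = 1"
    using ab gaussian_normalizing_constant[of p] by (simp add: card_Diff_singleton ennreal_mult[symmetric])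
  finally show ?thesis .
qed

text \<open>The exponent \<open>2 log f\<^sub>d - log f\<^sub>0\<close> is again a sheared Gaussian quadratic form, now with
  variance \<open>1 / (1 - 2 d\<^sup>2)\<close> in coordinate \<open>b\<close>.\<close>
lemma gauss_dens_shear_prec_chi_square_ratio:
  assumes ab: "a < p" "b < p" "a \<noteq> b"
  shows "(gauss_dens p (shear_prec p a b d) y)\<^sup>2 / gauss_dens p (shear_prec p a b 0) y
     = (2 * pi) powr (- (real p / 2)) * exp (-(1/2) * (y a + 2 * d * y b)\<^sup>2
         - (\<Sum>l\<in>{..<p} - {a}. (if l = b then 1 - 2 * d\<^sup>2 else 1) / 2 * (y l)\<^sup>2))"
proof -
  let ?\<kappa> = "(2 * pi) powr (- (real p / 2))"
  define S where "S = (\<Sum>l\<in>{..<p} - {a}. 1 / 2 * (y l)\<^sup>2)"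
  have weighted: "(\<Sum>l\<in>{..<p} - {a}. (if l = b then 1 - 2 * d\<^sup>2 else 1) / 2 * (y l)\<^sup>2) = S - d\<^sup>2 * (y b)\<^sup>2"
  proof -
    have "(\<Sum>l\<in>{..<p} - {a}. (if l = b then 1 - 2 * d\<^sup>2 else 1) / 2 * (y l)\<^sup>2)
        = (\<Sum>l\<in>{..<p} - {a}. 1 / 2 * (y l)\<^sup>2 - (if l = b then d\<^sup>2 * (y b)\<^sup>2 else 0))"
      by (intro sum.cong) (auto simp: algebra_simps)
    also have "\<dots> = S - d\<^sup>2 * (y b)\<^sup>2"
      using ab by (simp add: sum_subtractf S_def)
    finally show ?thesis .
  qed
  have ratio: "(?\<kappa> * exp X)\<^sup>2 / (?\<kappa> * exp Y) = ?\<kappa> * exp (2 * X - Y)" for X Y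
    by (simp add: exp_diff exp_double power_mult_distrib power2_eq_square)
  show ?thesis
    using ab unfolding gauss_dens_shear_prec[OF ab] S_def[symmetric] weighted ratio
    by (simp add: power2_eq_square algebra_simps)
qed

lemma nn_integral_gauss_dens_shear_prec_chi_square:
  fixes e :: "nat \<Rightarrow> 'a"
  assumes inj: "inj_on e {..<p}" and ab: "a < p" "b < p" "a \<noteq> b" and d: "2 * d\<^sup>2 < 1"
  shows "(\<integral>\<^sup>+y. ennreal ((gauss_dens p (shear_prec p a b d) (\<lambda>j. y (e j)))\<^sup>2
            / gauss_dens p (shear_prec p a b 0) (\<lambda>j. y (e j))) \<partial>PiM (e ` {..<p}) (\<lambda>_. lborel))
       = ennreal (1 / sqrt (1 - 2 * d\<^sup>2))"
proof -
  let ?\<kappa> = "(2 * pi) powr (- (real p / 2))"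
  define c where "c = (\<lambda>l. if l = b then 1 - 2 * d\<^sup>2 else 1)"
  have c: "c l > 0" for l using d by (simp add: c_def)
  have "(\<integral>\<^sup>+y. ennreal ((gauss_dens p (shear_prec p a b d) (\<lambda>j. y (e j)))\<^sup>2
            / gauss_dens p (shear_prec p a b 0) (\<lambda>j. y (e j))) \<partial>PiM (e ` {..<p}) (\<lambda>_. lborel))
      = (\<integral>\<^sup>+y. ennreal ?\<kappa> * ennreal (exp (-(1/2) * (y (e a) + 2 * d * y (e b))\<^sup>2
          - (\<Sum>l\<in>{..<p} - {a}. c l / 2 * (y (e l))\<^sup>2))) \<partial>PiM (e ` {..<p}) (\<lambda>_. lborel))"
    using ab by (intro nn_integral_cong)
      (simp add: gauss_dens_shear_prec_chi_square_ratio c_def ennreal_mult)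
  also have "\<dots> = ennreal ?\<kappa> * ennreal (sqrt (2 * pi) * (\<Prod>l\<in>{..<p} - {a}. sqrt (2 * pi / c l)))"
  proof -
    have ab_in: "a \<in> {..<p}" "b \<in> {..<p}" using ab by auto
    from nn_integral_PiM_sheared_gaussian[OF inj finite_lessThan this \<open>a \<noteq> b\<close>, of c "2 * d"] c
    have "(\<integral>\<^sup>+y. ennreal (exp (-(1/2) * (y (e a) + 2 * d * y (e b))\<^sup>2 - (\<Sum>l\<in>{..<p} - {a}. c l / 2 * (y (e l))\<^sup>2)))
        \<partial>PiM (e ` {..<p}) (\<lambda>_. lborel)) = ennreal (sqrt (2 * pi) * (\<Prod>l\<in>{..<p} - {a}. sqrt (2 * pi / c l)))"
      by simp
    moreover note borel_measurable_sheared_gaussian[OF ab_in, of e "2 * d" c]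
    ultimately show ?thesis using c by (simp add: nn_integral_cmult)
  qed
  also have "(\<Prod>l\<in>{..<p} - {a}. sqrt (2 * pi / c l))
      = (\<Prod>l\<in>{..<p} - {a}. sqrt (2 * pi) * (if l = b then 1 / sqrt (1 - 2 * d\<^sup>2) else 1))"
    by (intro prod.cong) (auto simp: c_def real_sqrt_divide)
  also have "\<dots> = sqrt (2 * pi) ^ (p - 1) * (1 / sqrt (1 - 2 * d\<^sup>2))"
    using ab by (simp add: prod.distrib card_Diff_singleton prod.delta')
  also have "ennreal ?\<kappa> * ennreal (sqrt (2 * pi) * (sqrt (2 * pi) ^ (p - 1) * (1 / sqrt (1 - 2 * d\<^sup>2))))
      = ennreal (1 / sqrt (1 - 2 * d\<^sup>2))"
  proof -
    have "?\<kappa> * (sqrt (2 * pi) * (sqrt (2 * pi) ^ (p - 1) * (1 / sqrt (1 - 2 * d\<^sup>2))))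
        = (?\<kappa> * (sqrt (2 * pi) * sqrt (2 * pi) ^ (p - 1))) * (1 / sqrt (1 - 2 * d\<^sup>2))"
      by (simp only: mult.assoc)
    also have "\<dots> = 1 / sqrt (1 - 2 * d\<^sup>2)"
      using ab gaussian_normalizing_constant[of p] by simp
    finally show ?thesis using d by (simp add: ennreal_mult[symmetric])
  qed
  finally show ?thesis .
qed

lemma nn_integral_data_law_shear_prec:
  assumes ab: "a < p" "b < p" "a \<noteq> b"
  shows "(\<integral>\<^sup>+x. ennreal (\<Prod>t<k. \<Prod>i<n t. gauss_dens p (shear_prec p a b (d t)) (\<lambda>j. x (t, i, j)))
           \<partial>data_space p k n) = 1"
  using ab gauss_dens_shear_prec_pos[OF ab]
  by (subst nn_integral_data_space_prod)
    (auto simp: measurable_gauss_dens_block nn_integral_gauss_dens_shear_prec inj_on_def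
      intro: gauss_dens_cong less_imp_le)

lemma nn_integral_data_law_shear_prec_chi_square:
  assumes ab: "a < p" "b < p" "a \<noteq> b" and \<delta>: "2 * \<delta>\<^sup>2 < 1" and xi: "\<And>t. t < k \<Longrightarrow> (xi t)\<^sup>2 = 1"
  shows "(\<integral>\<^sup>+x. ennreal ((\<Prod>t<k. \<Prod>i<n t. gauss_dens p (shear_prec p a b (xi t * \<delta>)) (\<lambda>j. x (t, i, j)))\<^sup>2
            / (\<Prod>t<k. \<Prod>i<n t. gauss_dens p (shear_prec p a b 0) (\<lambda>j. x (t, i, j)))) \<partial>data_space p k n)
       = ennreal ((1 / sqrt (1 - 2 * \<delta>\<^sup>2)) ^ (\<Sum>t<k. n t))"
proof -
  define h where "h = (\<lambda>t y. (gauss_dens p (shear_prec p a b (xi t * \<delta>)) y)\<^sup>2 / gauss_dens p (shear_prec p a b 0) y)"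
  have [measurable]: "(\<lambda>y. gauss_dens p Om (\<lambda>j. y (t, i, j))) \<in> borel_measurable (PiM ((\<lambda>j. (t, i, j)) ` {..<p}) (\<lambda>_. lborel))"
    for Om t i by (rule measurable_gauss_dens_block) simp
  have block: "(\<integral>\<^sup>+y. ennreal (h t (\<lambda>j. y (t, i, j))) \<partial>PiM ((\<lambda>j. (t, i, j)) ` {..<p}) (\<lambda>_. lborel))
      = ennreal (1 / sqrt (1 - 2 * \<delta>\<^sup>2))" if "t < k" for t i
  proof -
    have "(xi t * \<delta>)\<^sup>2 = \<delta>\<^sup>2" using xi[OF that] by (simp add: power_mult_distrib)
    with nn_integral_gauss_dens_shear_prec_chi_square[OF _ ab, of "\<lambda>j. (t, i, j)" "xi t * \<delta>"] \<delta>
    show ?thesis unfolding h_def by (simp add: inj_on_def)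
  qed
  have "(\<integral>\<^sup>+x. ennreal ((\<Prod>t<k. \<Prod>i<n t. gauss_dens p (shear_prec p a b (xi t * \<delta>)) (\<lambda>j. x (t, i, j)))\<^sup>2
            / (\<Prod>t<k. \<Prod>i<n t. gauss_dens p (shear_prec p a b 0) (\<lambda>j. x (t, i, j)))) \<partial>data_space p k n)
      = (\<integral>\<^sup>+x. ennreal (\<Prod>t<k. \<Prod>i<n t. h t (\<lambda>j. x (t, i, j))) \<partial>data_space p k n)"
    by (simp add: h_def prod_power_distrib prod_dividef)
  also have "\<dots> = (\<Prod>t<k. \<Prod>i<n t. \<integral>\<^sup>+y. ennreal (h t (\<lambda>j. y (t, i, j))) \<partial>PiM ((\<lambda>j. (t, i, j)) ` {..<p}) (\<lambda>_. lborel))"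
  proof (rule nn_integral_data_space_prod)
    show "(\<lambda>y. h t (\<lambda>j. y (t, i, j))) \<in> borel_measurable (PiM ((\<lambda>j. (t, i, j)) ` {..<p}) (\<lambda>_. lborel))" for t i
      unfolding h_def by measurable
    show "h t y = h t z" if "\<And>j. j < p \<Longrightarrow> y j = z j" for t y z
      unfolding h_def by (simp only: gauss_dens_cong[OF that])
    show "0 \<le> h t y" for t y
      unfolding h_def using gauss_dens_shear_prec_pos[OF ab] by (simp add: less_imp_le)
  qed
  also have "\<dots> = (\<Prod>t<k. \<Prod>i<n t. ennreal (1 / sqrt (1 - 2 * \<delta>\<^sup>2)))"
    by (intro prod.cong refl) (simp add: block)
  also have "\<dots> = ennreal ((1 / sqrt (1 - 2 * \<delta>\<^sup>2)) ^ (\<Sum>t<k. n t))"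
    using \<delta> by (simp add: prod_ennreal ennreal_power power_sum)
  finally show ?thesis .
qed

section \<open>Chi-square comparison of rejection probabilities\<close>

lemma chi_square_pointwise_bound:
  fixes f1 f0 \<epsilon> :: real
  assumes "f0 > 0" "\<epsilon> > 0"
  shows "f1 \<le> f0 + \<epsilon> / 2 * f0 + (f1 - f0)\<^sup>2 / f0 / (2 * \<epsilon>)"
proof -
  have "f0 + \<epsilon> / 2 * f0 + (f1 - f0)\<^sup>2 / f0 / (2 * \<epsilon>) - f1 = (\<epsilon> * f0 - (f1 - f0))\<^sup>2 / (2 * \<epsilon> * f0)"
    using assms by (simp add: field_simps power2_eq_square)
  moreover have "(\<epsilon> * f0 - (f1 - f0))\<^sup>2 / (2 * \<epsilon> * f0) \<ge> 0" using assms by simp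
  ultimately show ?thesis by linarith
qed

lemma nn_integral_chi_square_divergence:
  fixes F1 F0 :: "'a \<Rightarrow> real"
  assumes [measurable]: "F1 \<in> borel_measurable S" "F0 \<in> borel_measurable S"
    and pos: "\<And>x. F0 x > 0" and nonneg: "\<And>x. F1 x \<ge> 0"
    and i1: "(\<integral>\<^sup>+x. ennreal (F1 x) \<partial>S) = 1" and i0: "(\<integral>\<^sup>+x. ennreal (F0 x) \<partial>S) = 1"
    and ic: "(\<integral>\<^sup>+x. ennreal ((F1 x)\<^sup>2 / F0 x) \<partial>S) = ennreal chi" and chi: "chi \<ge> 1"
  shows "(\<integral>\<^sup>+x. ennreal ((F1 x - F0 x)\<^sup>2 / F0 x) \<partial>S) = ennreal (chi - 1)"
proof -
  define D where "D x = (F1 x - F0 x)\<^sup>2 / F0 x" for x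
  have D_nonneg: "D x \<ge> 0" for x using pos[of x] by (simp add: D_def)
  have expand: "ennreal (D x) + 2 * ennreal (F1 x) = ennreal ((F1 x)\<^sup>2 / F0 x) + ennreal (F0 x)" for x
  proof -
    have "D x + 2 * F1 x = (F1 x)\<^sup>2 / F0 x + F0 x"
      using pos[of x] by (simp add: D_def field_simps power2_eq_square)
    have "ennreal (D x) + 2 * ennreal (F1 x) = ennreal (D x + 2 * F1 x)"
      using D_nonneg[of x] nonneg[of x] by (simp add: ennreal_mult')
    also have "\<dots> = ennreal ((F1 x)\<^sup>2 / F0 x) + ennreal (F0 x)"
      using \<open>D x + 2 * F1 x = (F1 x)\<^sup>2 / F0 x + F0 x\<close> pos[of x] by (simp add: less_imp_le)
    finally show ?thesis .
  qed
  have "(\<integral>\<^sup>+x. ennreal (D x) \<partial>S) + 2 = (\<integral>\<^sup>+x. ennreal (D x) + 2 * ennreal (F1 x) \<partial>S)"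
    by (subst nn_integral_add) (auto simp: D_def nn_integral_cmult i1)
  also have "\<dots> = ennreal chi + 1"
    unfolding expand by (subst nn_integral_add) (auto simp: ic i0)
  also have "\<dots> = ennreal (chi + 1)"
    using chi by simp
  also have "\<dots> = ennreal ((chi - 1) + 2)"
    by (simp add: add.commute)
  also have "\<dots> = ennreal (chi - 1) + 2"
    using chi by (subst ennreal_plus) auto
  finally show ?thesis
    unfolding D_def[symmetric] by (simp add: ennreal_add_left_cancel[of 2, symmetric] add.commute)
qed

lemma measure_density_le_chi_square:
  fixes F1 F0 :: "'a \<Rightarrow> real"
  assumes [measurable]: "F1 \<in> borel_measurable S" "F0 \<in> borel_measurable S"
    and pos: "\<And>x. F0 x > 0" and nonneg: "\<And>x. F1 x \<ge> 0"
    and i1: "(\<integral>\<^sup>+x. ennreal (F1 x) \<partial>S) = 1" and i0: "(\<integral>\<^sup>+x. ennreal (F0 x) \<partial>S) = 1"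
    and ic: "(\<integral>\<^sup>+x. ennreal ((F1 x)\<^sup>2 / F0 x) \<partial>S) = ennreal chi" and chi: "chi \<ge> 1"
    and R [measurable]: "R \<in> sets S" and \<epsilon>: "\<epsilon> > 0"
  shows "measure (density S (\<lambda>x. ennreal (F1 x))) R
       \<le> measure (density S (\<lambda>x. ennreal (F0 x))) R + \<epsilon> / 2 + (chi - 1) / (2 * \<epsilon>)"
proof -
  define D where "D = (\<lambda>x. (F1 x - F0 x)\<^sup>2 / F0 x)"
  have D_nonneg: "D x \<ge> 0" for x using pos[of x] by (simp add: D_def)
  have [measurable]: "D \<in> borel_measurable S" unfolding D_def by measurable
  have intD: "(\<integral>\<^sup>+x. ennreal (D x) \<partial>S) = ennreal (chi - 1)"
    unfolding D_def by (rule nn_integral_chi_square_divergence[OF assms(1-8)])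
  let ?m = "\<lambda>F. emeasure (density S (\<lambda>x. ennreal (F x))) R"
  have m_eq: "?m F = (\<integral>\<^sup>+x. ennreal (F x) * indicator R x \<partial>S)" if "F \<in> borel_measurable S" for F
    using that by (simp add: emeasure_density)
  have "?m F1 \<le> (\<integral>\<^sup>+x. ennreal (F0 x) * indicator R x + ennreal (\<epsilon> / 2) * ennreal (F0 x)
      + ennreal (1 / (2 * \<epsilon>)) * ennreal (D x) \<partial>S)"
    unfolding m_eq[OF assms(1)]
  proof (intro nn_integral_mono)
    fix x
    have "F1 x \<le> F0 x + \<epsilon> / 2 * F0 x + D x / (2 * \<epsilon>)"
      unfolding D_def by (rule chi_square_pointwise_bound[OF pos \<epsilon>])
    moreover have "0 \<le> \<epsilon> / 2 * F0 x + D x / (2 * \<epsilon>)"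
      using pos[of x] D_nonneg[of x] \<epsilon> by simp
    ultimately show "ennreal (F1 x) * indicator R x \<le> ennreal (F0 x) * indicator R x
        + ennreal (\<epsilon> / 2) * ennreal (F0 x) + ennreal (1 / (2 * \<epsilon>)) * ennreal (D x)"
      using pos[of x] D_nonneg[of x] \<epsilon>
      by (auto simp: indicator_def ennreal_plus[symmetric] ennreal_mult[symmetric] less_imp_le
          simp del: ennreal_plus intro!: ennreal_leI)
  qed
  also have "\<dots> = ?m F0 + ennreal (\<epsilon> / 2) + ennreal ((chi - 1) / (2 * \<epsilon>))"
    using \<epsilon> chi by (simp add: nn_integral_add nn_integral_cmult m_eq i0 intD ennreal_mult[symmetric])
  finally have em: "?m F1 \<le> ?m F0 + ennreal (\<epsilon> / 2 + (chi - 1) / (2 * \<epsilon>))"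
    using \<epsilon> chi by (simp add: ennreal_plus[symmetric] add.assoc del: ennreal_plus)
  have finite: "?m F \<le> 1" if "F \<in> borel_measurable S" "(\<integral>\<^sup>+x. ennreal (F x) \<partial>S) = 1" for F
  proof -
    have "?m F \<le> emeasure (density S (\<lambda>x. ennreal (F x))) (space S)"
      using sets.sets_into_space[OF R] by (intro emeasure_mono) auto
    also have "\<dots> = 1" using that by (simp add: emeasure_density)
    finally show ?thesis .
  qed
  have "?m F1 = ennreal (measure (density S (\<lambda>x. ennreal (F1 x))) R)"
    "?m F0 = ennreal (measure (density S (\<lambda>x. ennreal (F0 x))) R)"
    using finite[OF assms(1) i1] finite[OF assms(2) i0]
    by (auto intro!: emeasure_eq_ennreal_measure simp: top_unique)
  with em show ?thesis
    using \<epsilon> chi by (simp add: ennreal_plus[symmetric] add.assoc del: ennreal_plus)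
qed

lemma chi_square_power_bound:
  fixes \<delta> q :: real
  assumes \<delta>: "2 * \<delta>\<^sup>2 < 1" and Nq: "2 * real N * \<delta>\<^sup>2 \<le> q" and q: "q \<le> 1 / 2"
  shows "(1 / sqrt (1 - 2 * \<delta>\<^sup>2)) ^ N - 1 \<le> 2 * q"
proof -
  define x where "x = 2 * \<delta>\<^sup>2"
  have x: "0 \<le> x" "x < 1" using \<delta> by (auto simp: x_def)
  have q0: "0 \<le> q" using Nq x(1) by (smt (verit) mult_nonneg_nonneg of_nat_0_le_iff x_def)
  have "1 - q \<le> 1 + real N * (- x)" using Nq by (simp add: x_def)
  also have "\<dots> \<le> (1 - x) ^ N" using Bernoulli_inequality[of "- x" N] x by simp
  finally have bernoulli: "1 - q \<le> (1 - x) ^ N" .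
  have "(1 / sqrt (1 - x)) ^ N = 1 / sqrt ((1 - x) ^ N)"
    by (simp add: power_divide real_sqrt_power)
  also have "\<dots> \<le> 1 / sqrt (1 - q)"
    using q bernoulli by (intro divide_left_mono) auto
  also have "\<dots> \<le> 1 / (1 - q)"
  proof -
    have "(1 - q) * (1 - q) \<le> 1 - q" using q q0 by (intro mult_left_le) auto
    then have "1 - q \<le> sqrt (1 - q)" using q by (intro real_le_rsqrt) (simp add: power2_eq_square)
    then show ?thesis using q by (intro divide_left_mono) auto
  qed
  also have "\<dots> \<le> 1 + 2 * q"
  proof -
    have "0 \<le> q * (1 - 2 * q)" using q q0 by simp
    moreover have "(1 + 2 * q) * (1 - q) = 1 + q * (1 - 2 * q)" by (simp add: algebra_simps)
    ultimately have "1 \<le> (1 + 2 * q) * (1 - q)" by linarith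
    then show ?thesis using q by (simp add: field_simps)
  qed
  finally show ?thesis by (simp add: x_def)
qed

section \<open>The least favourable pair\<close>

lemma shear_prec_family_in_F_class:
  assumes ab: "a < p" "b < p" "a \<noteq> b" and s: "2 \<le> s"
    and r: "r \<le> 1" "r \<le> 1 - 1 / M" "2 * r \<le> M - 1" and d: "\<And>t. t < k \<Longrightarrow> \<bar>d t\<bar> \<le> r"
  shows "(\<lambda>t. shear_prec p a b (d t)) \<in> F_class M p k s"
  unfolding F_class_def
proof (intro CollectI conjI allI impI)
  fix t assume "t < k"
  then have "\<bar>d t\<bar> \<le> r" by (rule d)
  moreover have "(d t)\<^sup>2 \<le> \<bar>d t\<bar>"
    using mult_left_le[of "\<bar>d t\<bar>" "\<bar>d t\<bar>"] \<open>\<bar>d t\<bar> \<le> r\<close> r(1)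
    by (simp add: power2_eq_square abs_mult_self_eq)
  ultimately show "cond1 M p (shear_prec p a b (d t))"
    using r by (intro cond1_shear_prec[OF ab]) auto
next
  fix i assume "i < p"
  have "{j. j < p \<and> j \<noteq> i \<and> (\<exists>t<k. shear_prec p a b (d t) $$ (i, j) \<noteq> 0)} \<subseteq> {a, b}"
    using ab \<open>i < p\<close> by (auto simp: shear_prec_entry split: if_splits)
  then have "card {j. j < p \<and> j \<noteq> i \<and> (\<exists>t<k. shear_prec p a b (d t) $$ (i, j) \<noteq> 0)} \<le> card {a, b}"
    by (intro card_mono) auto
  also have "\<dots> \<le> s" using s by (simp add: card_insert_le_m1)
  finally show "card {j. j < p \<and> j \<noteq> i \<and> (\<exists>t<k. shear_prec p a b (d t) $$ (i, j) \<noteq> 0)} \<le> s" .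
qed

lemma identity_family_in_H0_set:
  assumes "a < p" "b < p" "a \<noteq> b" "2 \<le> s" "M \<ge> 1"
  shows "(\<lambda>_. shear_prec p a b 0) \<in> H0_set M p k s a b"
proof -
  have "(\<lambda>t. shear_prec p a b ((\<lambda>_. 0) t)) \<in> F_class M p k s"
    using assms by (intro shear_prec_family_in_F_class[where r = 0]) (auto simp: field_simps)
  then show ?thesis unfolding H0_set_def using assms by (simp add: shear_prec_entry)
qed

lemma signed_shear_family_in_Al1_set:
  assumes ab: "a < p" "b < p" "a \<noteq> b" and s: "2 \<le> s"
    and \<delta>: "0 \<le> \<delta>" "\<delta> \<le> 1" "\<delta> \<le> 1 - 1 / M" "2 * \<delta> \<le> M - 1" "eps \<le> real k * \<delta>"
    and xi: "\<And>t. t < k \<Longrightarrow> xi t \<in> {1, -1}"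
  shows "(\<lambda>t. shear_prec p a b (xi t * \<delta>)) \<in> Al1_set M p k s a b eps xi"
proof -
  have "\<bar>xi t * \<delta>\<bar> \<le> \<delta>" if "t < k" for t
    using xi[OF that] \<delta>(1) by auto
  then have F: "(\<lambda>t. shear_prec p a b (xi t * \<delta>)) \<in> F_class M p k s"
    using \<delta> by (intro shear_prec_family_in_F_class[OF ab s, of \<delta>]) auto
  have entry: "shear_prec p a b (xi t * \<delta>) $$ (a, b) = xi t * \<delta>" for t
    using ab by (simp add: shear_prec_entry)
  have "xi t * shear_prec p a b (xi t * \<delta>) $$ (a, b) = \<delta>" "\<bar>shear_prec p a b (xi t * \<delta>) $$ (a, b)\<bar> = \<delta>"
    if "t < k" for t
    using xi[OF that] \<delta>(1) by (auto simp: entry)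
  then have "(\<Sum>t<k. xi t * shear_prec p a b (xi t * \<delta>) $$ (a, b)) = real k * \<delta>"
    "(\<Sum>t<k. \<bar>shear_prec p a b (xi t * \<delta>) $$ (a, b)\<bar>) = real k * \<delta>"
    by simp_all
  then show ?thesis unfolding Al1_set_def using F \<delta>(5) by simp
qed

lemma rej_prob_signed_shear_le:
  assumes ab: "a < p" "b < p" "a \<noteq> b" and \<delta>: "2 * \<delta>\<^sup>2 < 1" and xi: "\<And>t. t < k \<Longrightarrow> (xi t)\<^sup>2 = 1"
    and \<epsilon>: "\<epsilon> > 0" and phi [measurable]: "Measurable.pred (data_space p k n) phi"
  shows "rej_prob p k n (\<lambda>t. shear_prec p a b (xi t * \<delta>)) phi
       \<le> rej_prob p k n (\<lambda>_. shear_prec p a b 0) phi + \<epsilon> / 2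
         + ((1 / sqrt (1 - 2 * \<delta>\<^sup>2)) ^ (\<Sum>t<k. n t) - 1) / (2 * \<epsilon>)"
proof -
  define F where "F d x = (\<Prod>t<k. \<Prod>i<n t. gauss_dens p (shear_prec p a b (d t)) (\<lambda>j. x (t, i, j)))" for d x
  have [measurable]: "F d \<in> borel_measurable (data_space p k n)" for d
    unfolding F_def data_space_def
    by (intro borel_measurable_prod measurable_gauss_dens_block) (auto simp: data_idx_def)
  have normalized: "(\<integral>\<^sup>+x. ennreal (F d x) \<partial>data_space p k n) = 1" for d
    unfolding F_def by (rule nn_integral_data_law_shear_prec[OF ab])
  have chi: "(1 / sqrt (1 - 2 * \<delta>\<^sup>2)) ^ (\<Sum>t<k. n t) \<ge> 1"
  proof (rule one_le_power)
    have "sqrt (1 - 2 * \<delta>\<^sup>2) \<le> 1" "sqrt (1 - 2 * \<delta>\<^sup>2) > 0" using \<delta> by auto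
    then show "1 \<le> 1 / sqrt (1 - 2 * \<delta>\<^sup>2)" by (simp add: field_simps)
  qed
  have "measure (density (data_space p k n) (\<lambda>x. ennreal (F (\<lambda>t. xi t * \<delta>) x))) {x \<in> space (data_space p k n). phi x}
      \<le> measure (density (data_space p k n) (\<lambda>x. ennreal (F (\<lambda>_. 0) x))) {x \<in> space (data_space p k n). phi x}
        + \<epsilon> / 2 + ((1 / sqrt (1 - 2 * \<delta>\<^sup>2)) ^ (\<Sum>t<k. n t) - 1) / (2 * \<epsilon>)"
  proof (rule measure_density_le_chi_square)
    show "F (\<lambda>_. 0) x > 0" "F (\<lambda>t. xi t * \<delta>) x \<ge> 0" for x
      unfolding F_def using gauss_dens_shear_prec_pos[OF ab] by (auto intro!: prod_pos prod_nonneg less_imp_le)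
    show "(\<integral>\<^sup>+x. ennreal ((F (\<lambda>t. xi t * \<delta>) x)\<^sup>2 / F (\<lambda>_. 0) x) \<partial>data_space p k n)
        = ennreal ((1 / sqrt (1 - 2 * \<delta>\<^sup>2)) ^ (\<Sum>t<k. n t))"
      unfolding F_def by (rule nn_integral_data_law_shear_prec_chi_square[OF ab \<delta> xi])
  qed (use \<epsilon> chi normalized in auto)
  then show ?thesis by (simp add: rej_prob_def data_law_def F_def)
qed

lemma exists_indistinguishable_alternative:
  fixes n :: "nat \<Rightarrow> nat"
  assumes ab: "a < p" "b < p" "a \<noteq> b" and s: "2 \<le> s" and k: "1 \<le> k" and n0: "1 \<le> n0"
    and n: "\<And>t. t < k \<Longrightarrow> real (n t) \<le> M0 * real n0" and M0: "M0 \<ge> 1"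
    and xi: "\<And>t. t < k \<Longrightarrow> xi t \<in> {1, -1}"
    and c: "0 < c" "c \<le> 1 / 2" "c \<le> 1 - 1 / M" "2 * c \<le> M - 1" "2 * M0 * c \<le> \<eta>" and \<eta>: "\<eta> \<le> 1"
    and phi: "Measurable.pred (data_space p k n) phi"
  shows "\<exists>Om1 \<in> Al1_set M p k s a b (c * sqrt (real k / real n0)) xi. \<exists>Om0 \<in> H0_set M p k s a b.
           rej_prob p k n Om1 phi \<le> rej_prob p k n Om0 phi + \<eta>"
proof -
  define \<delta> where "\<delta> = c / sqrt (real k * real n0)"
  define N where "N = (\<Sum>t<k. n t)"
  have kn: "real k * real n0 \<ge> 1" using k n0 by (simp add: one_le_mult_iff flip: of_nat_mult)
  have \<eta>0: "0 < \<eta>" using c M0 by (smt (verit) mult_pos_pos)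
  have \<delta>0: "0 \<le> \<delta>" using c by (simp add: \<delta>_def)
  have "c / sqrt (real k * real n0) \<le> c / 1"
    using c kn by (intro divide_left_mono) auto
  then have \<delta>c: "\<delta> \<le> c" by (simp add: \<delta>_def)
  have small: "2 * \<delta>\<^sup>2 < 1"
    using power_mono[OF \<delta>c \<delta>0, of 2] c(2) power_mono[of c "1/2" 2] c(1) by (simp add: power2_eq_square)
  have size: "real k * \<delta> = c * sqrt (real k / real n0)"
    using k n0 by (simp add: \<delta>_def real_sqrt_mult real_sqrt_divide field_simps)
  have "real N \<le> real k * (M0 * real n0)"
    using sum_mono[of "{..<k}" "\<lambda>t. real (n t)" "\<lambda>_. M0 * real n0"] n by (simp add: N_def)
  then have "2 * real N * \<delta>\<^sup>2 \<le> 2 * (real k * (M0 * real n0)) * \<delta>\<^sup>2"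
    by (intro mult_right_mono) auto
  also have "\<dots> = (2 * M0 * c) * c"
  proof -
    have "\<delta>\<^sup>2 = c\<^sup>2 / (real k * real n0)" using kn by (simp add: \<delta>_def power_divide)
    moreover have "real k * real n0 \<noteq> 0" using kn by linarith
    ultimately show ?thesis by (simp add: field_simps power2_eq_square)
  qed
  also have "\<dots> \<le> \<eta> * c" using c by (intro mult_right_mono) auto
  finally have Nq: "2 * real N * \<delta>\<^sup>2 \<le> \<eta> * c" .
  have "\<eta> * c \<le> 1 / 2" using c \<eta> \<eta>0 mult_mono[of \<eta> 1 c "1/2"] by simp
  with Nq have "(1 / sqrt (1 - 2 * \<delta>\<^sup>2)) ^ N - 1 \<le> 2 * (\<eta> * c)"
    by (rule chi_square_power_bound[OF small])
  then have "((1 / sqrt (1 - 2 * \<delta>\<^sup>2)) ^ N - 1) / (2 * \<eta>) \<le> c"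
    using \<eta>0 by (simp add: divide_le_eq ac_simps)
  also have "c \<le> \<eta> / 2"
  proof -
    have "2 * c * 1 \<le> 2 * c * M0" using M0 c by (intro mult_left_mono) auto
    then show ?thesis using c(5) by (simp add: ac_simps)
  qed
  finally have excess: "((1 / sqrt (1 - 2 * \<delta>\<^sup>2)) ^ N - 1) / (2 * \<eta>) \<le> \<eta> / 2" .
  have xi2: "(xi t)\<^sup>2 = 1" if "t < k" for t using xi[OF that] by auto
  have "rej_prob p k n (\<lambda>t. shear_prec p a b (xi t * \<delta>)) phi
      \<le> rej_prob p k n (\<lambda>_. shear_prec p a b 0) phi + \<eta>"
    using rej_prob_signed_shear_le[where xi = xi, OF ab small xi2 \<eta>0 phi] excess unfolding N_def by linarith
  moreover have "(\<lambda>t. shear_prec p a b (xi t * \<delta>)) \<in> Al1_set M p k s a b (c * sqrt (real k / real n0)) xi"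
    using \<delta>0 \<delta>c c size by (intro signed_shear_family_in_Al1_set[OF ab s _ _ _ _ _ xi]) auto
  moreover have "(\<lambda>_. shear_prec p a b 0) \<in> H0_set M p k s a b"
    using c by (intro identity_family_in_H0_set[OF ab s]) (simp add: field_simps)
  ultimately show ?thesis by blast
qed

lemma liminf_INF_less_of_dominated:
  fixes f :: "nat \<Rightarrow> 'a \<Rightarrow> real"
  assumes size: "limsup (\<lambda>N. SUP x \<in> H N. ereal (f N x)) \<le> ereal \<alpha>" and \<eta>: "\<alpha> + \<eta> < \<beta>"
    and dom: "\<forall>\<^sub>F N in sequentially. \<exists>y \<in> A N. \<exists>x \<in> H N. f N y \<le> f N x + \<eta>"
  shows "liminf (\<lambda>N. INF y \<in> A N. ereal (f N y)) < ereal \<beta>"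
proof -
  define \<gamma> where "\<gamma> = (\<beta> - \<alpha> - \<eta>) / 2"
  have "ereal \<alpha> < ereal (\<alpha> + \<gamma>)" using \<eta> by (simp add: \<gamma>_def)
  with size have "limsup (\<lambda>N. SUP x \<in> H N. ereal (f N x)) < ereal (\<alpha> + \<gamma>)"
    by (rule le_less_trans)
  then have "\<forall>\<^sub>F N in sequentially. (SUP x \<in> H N. ereal (f N x)) < ereal (\<alpha> + \<gamma>)"
    by (rule Limsup_lessD)
  with dom have "\<forall>\<^sub>F N in sequentially. (INF y \<in> A N. ereal (f N y)) \<le> ereal (\<alpha> + \<gamma> + \<eta>)"
  proof eventually_elim
    case (elim N)
    then obtain y x where y: "y \<in> A N" and x: "x \<in> H N" and le: "f N y \<le> f N x + \<eta>" by blast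
    have "ereal (f N x) < ereal (\<alpha> + \<gamma>)" using elim(2) x by (meson SUP_upper le_less_trans)
    then have "ereal (f N y) \<le> ereal (\<alpha> + \<gamma> + \<eta>)" using le by simp
    then show ?case using y by (meson INF_lower order_trans)
  qed
  then have "liminf (\<lambda>N. INF y \<in> A N. ereal (f N y)) \<le> ereal (\<alpha> + \<gamma> + \<eta>)"
    by (intro Liminf_le) auto
  also have "\<dots> < ereal \<beta>" using \<eta> by (simp add: \<gamma>_def field_simps)
  finally show ?thesis .
qed

lemma liminf_rej_prob_Al1_set_less:
  fixes n :: "nat \<Rightarrow> nat \<Rightarrow> nat" and k :: "nat \<Rightarrow> nat"
  defines "n0 \<equiv> \<lambda>N. Min (n N ` {..<k N})"
  assumes M0: "M0 \<ge> 1"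
    and c: "0 < c" "c \<le> 1 / 2" "c \<le> 1 - 1 / M" "2 * c \<le> M - 1" "2 * M0 * c \<le> \<eta>" and \<eta>: "\<eta> \<le> 1" "\<alpha> + \<eta> < \<beta>"
    and ab: "a \<noteq> b" "\<And>N. 1 \<le> k N \<and> a < p N \<and> b < p N"
    and xi: "\<And>N t. t < k N \<Longrightarrow> xi N t \<in> {1, -1}"
    and n: "\<And>N t. t < k N \<Longrightarrow> real (n N t) \<le> M0 * real (n0 N)"
    and n0: "filterlim n0 at_top sequentially" and s: "\<forall>\<^sub>F N in sequentially. 2 < s N"
    and phi: "\<And>N. Measurable.pred (data_space (p N) (k N) (n N)) (phi N)"
    and size: "limsup (\<lambda>N. SUP Om \<in> H0_set M (p N) (k N) (s N) a b.
                 ereal (rej_prob (p N) (k N) (n N) Om (phi N))) \<le> ereal \<alpha>"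
  shows "liminf (\<lambda>N. INF Om \<in> Al1_set M (p N) (k N) (s N) a b (c * sqrt (real (k N) / real (n0 N))) (xi N).
           ereal (rej_prob (p N) (k N) (n N) Om (phi N))) < ereal \<beta>"
proof (rule liminf_INF_less_of_dominated[OF size \<eta>(2)])
  have "\<forall>\<^sub>F N in sequentially. 1 \<le> n0 N" using n0 by (simp add: filterlim_at_top)
  with s show "\<forall>\<^sub>F N in sequentially. \<exists>Om1 \<in> Al1_set M (p N) (k N) (s N) a b (c * sqrt (real (k N) / real (n0 N))) (xi N).
      \<exists>Om0 \<in> H0_set M (p N) (k N) (s N) a b.
        rej_prob (p N) (k N) (n N) Om1 (phi N) \<le> rej_prob (p N) (k N) (n N) Om0 (phi N) + \<eta>"
  proof eventually_elim
    case (elim N)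
    then show ?case
      using ab(2)[of N] exists_indistinguishable_alternative[OF _ _ ab(1) _ _ _ n[where N = N] M0 xi[where N = N] c \<eta>(1) phi[of N]]
      by auto
  qed
qed

lemma exists_small_shear_scale:
  fixes M M0 \<eta> :: real
  assumes "M > 1" "M0 \<ge> 1" "\<eta> > 0"
  shows "\<exists>c>0. c \<le> 1 / 2 \<and> c \<le> 1 - 1 / M \<and> 2 * c \<le> M - 1 \<and> 2 * M0 * c \<le> \<eta>"
proof -
  define c where "c = min (min (1 / 2) (1 - 1 / M)) (min ((M - 1) / 2) (\<eta> / (2 * M0)))"
  have "c \<le> 1 / 2" "c \<le> 1 - 1 / M" "c \<le> (M - 1) / 2" "c \<le> \<eta> / (2 * M0)"
    unfolding c_def min_le_iff_disj by simp_all
  moreover have "c > 0" using assms by (simp add: c_def field_simps)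
  ultimately show ?thesis using assms by (intro exI[of _ c]) (auto simp: field_simps)

qed

theorem theorem4:
  fixes M M0 M1 mu :: real
  assumes "M > 1" and "M0 \<ge> 1" and "M1 > 0" and "mu > 2"
  shows "\<exists>C0>0. \<forall>(C::real) (p::nat \<Rightarrow> nat) (k::nat \<Rightarrow> nat) (s::nat \<Rightarrow> nat)
      (nn::nat \<Rightarrow> nat \<Rightarrow> nat) (xi::nat \<Rightarrow> nat \<Rightarrow> real) (a::nat) (b::nat).
      (let n0 = (\<lambda>N. Min (nn N ` {..<k N})) in
        C \<ge> C0 \<and> a \<noteq> b \<and>
        (\<forall>N. k N \<ge> 1 \<and> a < p N \<and> b < p N) \<and>
        (\<forall>N t. t < k N \<longrightarrow> xi N t \<in> {1, -1}) \<and>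
        (\<forall>N t. t < k N \<longrightarrow> real (nn N t) \<le> M0 * real (n0 N)) \<and>
        filterlim n0 at_top sequentially \<and>
        (\<forall>\<^sub>F N in sequentially.
           real (k N) \<le> M1 * ln (real (p N)) \<and> s N > 2 \<and>
           real (s N) ^ 2 / real (k N) * (real (k N) + ln (real (p N))) ^ 2 > C * real (n0 N) \<and>
           real (p N) > real (s N) powr mu) \<and>
        ((\<lambda>N. real (s N) * (1 + ln (real (p N)) / real (k N)) / real (n0 N)) \<longlonglongrightarrow> 0))
      \<longrightarrow> (\<forall>\<alpha> \<beta> :: real. \<alpha> < \<beta> \<and> \<beta> < 1 \<longrightarrow>
           (\<exists>c>0. \<forall>phi :: nat \<Rightarrow> (nat \<times> nat \<times> nat \<Rightarrow> real) \<Rightarrow> bool.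
              ((\<forall>N. Measurable.pred (data_space (p N) (k N) (nn N)) (phi N)) \<and>
               limsup (\<lambda>N. SUP Om \<in> H0_set M (p N) (k N) (s N) a b.
                   ereal (rej_prob (p N) (k N) (nn N) Om (phi N))) \<le> ereal \<alpha>)
              \<longrightarrow> liminf (\<lambda>N. INF Om \<in> Al1_set M (p N) (k N) (s N) a b
                       (c * sqrt (real (k N) / real (Min (nn N ` {..<k N})))) (xi N).
                   ereal (rej_prob (p N) (k N) (nn N) Om (phi N))) < ereal \<beta>))"
proof (rule exI[of _ 1], intro conjI allI impI)
  fix C :: real and p k s :: "nat \<Rightarrow> nat" and nn :: "nat \<Rightarrow> nat \<Rightarrow> nat"
    and xi :: "nat \<Rightarrow> nat \<Rightarrow> real" and a b :: nat and \<alpha> \<beta> :: real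
  assume hyps: "let n0 = (\<lambda>N. Min (nn N ` {..<k N})) in C \<ge> 1 \<and> a \<noteq> b \<and>
        (\<forall>N. k N \<ge> 1 \<and> a < p N \<and> b < p N) \<and> (\<forall>N t. t < k N \<longrightarrow> xi N t \<in> {1, -1}) \<and>
        (\<forall>N t. t < k N \<longrightarrow> real (nn N t) \<le> M0 * real (n0 N)) \<and> filterlim n0 at_top sequentially \<and>
        (\<forall>\<^sub>F N in sequentially. real (k N) \<le> M1 * ln (real (p N)) \<and> s N > 2 \<and>
           real (s N) ^ 2 / real (k N) * (real (k N) + ln (real (p N))) ^ 2 > C * real (n0 N) \<and>
           real (p N) > real (s N) powr mu) \<and>
        ((\<lambda>N. real (s N) * (1 + ln (real (p N)) / real (k N)) / real (n0 N)) \<longlonglongrightarrow> 0)"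
    and \<alpha>\<beta>: "\<alpha> < \<beta> \<and> \<beta> < 1"
  define \<eta> where "\<eta> = min 1 ((\<beta> - \<alpha>) / 2)"
  have "\<eta> \<le> (\<beta> - \<alpha>) / 2" unfolding \<eta>_def by (rule min.cobounded2)
  then have \<eta>: "0 < \<eta>" "\<eta> \<le> 1" "\<alpha> + \<eta> < \<beta>" using \<alpha>\<beta> by (auto simp: \<eta>_def)
  obtain c where c: "0 < c" "c \<le> 1 / 2" "c \<le> 1 - 1 / M" "2 * c \<le> M - 1" "2 * M0 * c \<le> \<eta>"
    using exists_small_shear_scale[OF assms(1,2) \<eta>(1)] by blast
  have s: "\<forall>\<^sub>F N in sequentially. 2 < s N"
    using hyps unfolding Let_def by (auto elim: eventually_mono)
  show "\<exists>c>0. \<forall>phi. ((\<forall>N. Measurable.pred (data_space (p N) (k N) (nn N)) (phi N)) \<and>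
      limsup (\<lambda>N. SUP Om \<in> H0_set M (p N) (k N) (s N) a b. ereal (rej_prob (p N) (k N) (nn N) Om (phi N)))
        \<le> ereal \<alpha>)
      \<longrightarrow> liminf (\<lambda>N. INF Om \<in> Al1_set M (p N) (k N) (s N) a b
            (c * sqrt (real (k N) / real (Min (nn N ` {..<k N})))) (xi N).
          ereal (rej_prob (p N) (k N) (nn N) Om (phi N))) < ereal \<beta>"
    using hyps unfolding Let_def
    by (intro exI[of _ c] conjI allI impI c(1) liminf_rej_prob_Al1_set_less[OF assms(2) c \<eta>(2,3) _ _ _ _ _ s])
      auto
qed (simp)

end
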